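(* For every real number $\kappa$ with $0\le\kappa<\frac58$ there exists a positive integer $n_\kappa$ such that for every integer $n\ge n_\kappa$ and every doubly stochastic $n\times n$ matrix $\mathcal M$, there exists a directed $(2n-1)$-regular multigraph $G$ on vertex set $[n]$ whose throughput with respect to $\mathcal M$ is at least $\kappa$ (i.e., $G$ hosts $\kappa\mathcal M$).
   Context: Let $n\ge 1$ and $[n]=\{1,\dots,n\}$. Networks are finite directed multigraphs on vertex set $[n]$; self-loops and parallel arcs are allowed. A directed multigraph is directed $r$-regular if every vertex has exactly $r$ outgoing and exactly $r$ incoming arcs (a self-loop at $v$ counts as one outgoing and one incoming arc of $v$). A path is a non-empty sequence of arcs $((u_1,v_1),\dots,(u_\ell,v_\ell))$ with $v_i=u_{i+1}$ for $i<\ell$; it goes from $u_1$ to $v_\ell$ and has length $\ell\ge 1$ (so demand from a vertex to itself must use at least one arc, e.g. a self-loop). An $n\times n$ matrix is doubly stochastic if all entries are nonnegative and every row and every column sums to $1$. In a directed $(2n-1)$-regular multigraph $G$ on $[n]$ every arc has capacity $\frac{1}{2n-1}$. $G$ hosts a nonnegative $n\times n$ matrix $\mathcal M=(a_{i,j})$ if there is a finite collection $\{(P_k,d_k)\}$, where each $P_k$ is a path in $G$ from some $s_k$ to some $t_k$ and $d_k\ge 0$, such that $\sum_{k:\,s_k=u,\,t_k=v} d_k=a_{u,v}$ for all $u,v\in[n]$, and for every arc $e$ of $G$ (parallel arcs are distinct arcs) $\sum_{k:\,e\in P_k} d_k\le \frac{1}{2n-1}$. The throughput of $G$ with respect to a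 doubly stochastic $\mathcal M$ is the largest $\theta$ such that $G$ hosts $\theta\mathcal M$. *)

theory Defs
  imports Complex_Main
begin

text \<open>A directed multigraph on vertex set [n] = {1..n} is given by a multiplicity
  function mult :: nat => nat => nat; mult u v is the number of (distinct, parallel)
  arcs from u to v (self-loops allowed).\<close>

type_synonym arc = "nat \<times> nat \<times> nat"

definition arcs :: "nat \<Rightarrow> (nat \<Rightarrow> nat \<Rightarrow> nat) \<Rightarrow> arc set" where
  "arcs n mult = {(u, v, i). u \<in> {1..n} \<and> v \<in> {1..n} \<and> i < mult u v}"

definition arc_tail :: "arc \<Rightarrow> nat" where "arc_tail e = fst e"
definition arc_head :: "arc \<Rightarrow> nat" where "arc_head e = fst (snd e)"

definition regular_multigraph :: "nat \<Rightarrow> nat \<Rightarrow> (nat \<Rightarrow> nat \<Rightarrow> nat) \<Rightarrow> bool" where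
  "regular_multigraph n r mult \<longleftrightarrow>
     (\<forall>u\<in>{1..n}. (\<Sum>v=1..n. mult u v) = r) \<and>
     (\<forall>v\<in>{1..n}. (\<Sum>u=1..n. mult u v) = r)"

definition is_path :: "nat \<Rightarrow> (nat \<Rightarrow> nat \<Rightarrow> nat) \<Rightarrow> arc list \<Rightarrow> bool" where
  "is_path n mult p \<longleftrightarrow> p \<noteq> [] \<and> set p \<subseteq> arcs n mult \<and>
     (\<forall>k. Suc k < length p \<longrightarrow> arc_head (p ! k) = arc_tail (p ! Suc k))"

definition path_src :: "arc list \<Rightarrow> nat" where "path_src p = arc_tail (hd p)"
definition path_tgt :: "arc list \<Rightarrow> nat" where "path_tgt p = arc_head (last p)"

definition doubly_stochastic :: "nat \<Rightarrow> (nat \<Rightarrow> nat \<Rightarrow> real) \<Rightarrow> bool" where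
  "doubly_stochastic n M \<longleftrightarrow>
     (\<forall>i\<in>{1..n}. \<forall>j\<in>{1..n}. M i j \<ge> 0) \<and>
     (\<forall>i\<in>{1..n}. (\<Sum>j=1..n. M i j) = 1) \<and>
     (\<forall>j\<in>{1..n}. (\<Sum>i=1..n. M i j) = 1)"

definition hosts :: "nat \<Rightarrow> (nat \<Rightarrow> nat \<Rightarrow> nat) \<Rightarrow> (nat \<Rightarrow> nat \<Rightarrow> real) \<Rightarrow> bool" where
  "hosts n mult A \<longleftrightarrow>
     (\<exists>(K::nat) (P::nat \<Rightarrow> arc list) (d::nat \<Rightarrow> real).
        (\<forall>k<K. is_path n mult (P k) \<and> d k \<ge> 0) \<and>
        (\<forall>u\<in>{1..n}. \<forall>v\<in>{1..n}.
            (\<Sum>k\<in>{k. k < K \<and> path_src (P k) = u \<and> path_tgt (P k) = v}. d k) = A u v) \<and>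
        (\<forall>e\<in>arcs n mult.
            (\<Sum>k\<in>{k. k < K \<and> e \<in> set (P k)}. d k) \<le> 1 / real (2 * n - 1)))"

end

theory Submission
  imports Defs
begin

(* Scale the demand to x = (5/4) n M, so that every row and column of x sums to 5n/4, and round
  (99/125) x entrywise to an integer matrix X whose row and column sums stay below n - 1.  Then
  X + 1 can be completed to a (2n-1)-regular multigraph: X u v parallel arcs from u to v carry the
  bulk of x u v directly, and one extra arc between every ordered pair is reserved for relaying.
  The residual max 0 (x u v - X u v) is split evenly over the n two-arc paths u -> w -> v, so a
  reserved arc (a, b) carries (residual of row a + residual of column b) / n.  Rounding the
  entries separately in 101 classes, grouped by the fractional part of x, keeps every row and
  column residual below n/2, so all capacities are respected and G hosts x / (2n-1), which is at
  least (5/8) M. *)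

section \<open>Matrix rounding\<close>

lemma homogeneous_system_nontrivial_solution:
  fixes a :: "'q \<Rightarrow> 'v \<Rightarrow> real"
  assumes "finite Q" "finite V" "card Q < card V"
  shows "\<exists>x. (\<exists>i\<in>V. x i \<noteq> 0) \<and> (\<forall>q\<in>Q. (\<Sum>i\<in>V. a q i * x i) = 0)"
  using assms
proof (induction Q arbitrary: V a rule: finite_induct)
  case empty
  then obtain i where "i \<in> V" by fastforce
  then show ?case by (intro exI[of _ "\<lambda>j. if j = i then 1 else 0"]) auto
next
  case (insert q Q V a)
  show ?case
  proof (cases "\<forall>i\<in>V. a q i = 0")
    case True
    with insert show ?thesis by fastforce
  next
    case False
    then obtain j where j: "j \<in> V" "a q j \<noteq> 0" by blast
    define V' where "V' = V - {j}"
    \<comment> \<open>Gaussian elimination of the unknown \<open>j\<close> by means of equation \<open>q\<close>.\<close>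
    define b where "b q' i = a q' i - a q' j * a q i / a q j" for q' i
    have "card Q < card V'" using insert j by (simp add: V'_def)
    then obtain y where y: "\<exists>i\<in>V'. y i \<noteq> 0" "\<forall>q'\<in>Q. (\<Sum>i\<in>V'. b q' i * y i) = 0"
      using insert.IH[of V' b] insert.prems(1) by (auto simp: V'_def)
    define x where "x i = (if i = j then - (\<Sum>i\<in>V'. a q i * y i) / a q j else y i)" for i
    have split: "(\<Sum>i\<in>V. a q' i * x i) = a q' j * x j + (\<Sum>i\<in>V'. a q' i * y i)" for q'
    proof -
      have "(\<Sum>i\<in>V'. a q' i * x i) = (\<Sum>i\<in>V'. a q' i * y i)"
        by (rule sum.cong) (auto simp: V'_def x_def)
      then show ?thesis using j insert.prems by (simp add: V'_def sum.remove)
    qed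
    have "(\<Sum>i\<in>V. a q' i * x i) = (\<Sum>i\<in>V'. b q' i * y i)" for q'
      unfolding split using j
      by (simp add: x_def b_def algebra_simps sum_subtractf sum_divide_distrib sum_distrib_left)
    then have "(\<Sum>i\<in>V. a q' i * x i) = 0" if "q' \<in> insert q Q" for q'
      using that y(2) j by (auto simp: b_def)
    moreover have "\<exists>i\<in>V. x i \<noteq> 0" using y(1) by (auto simp: V'_def x_def)
    ultimately show ?thesis by blast
  qed
qed

lemma sum_row_of_subset_Times:
  assumes "E \<subseteq> R \<times> C" "finite C"
  shows "(\<Sum>c\<in>C. if (r, c) \<in> E then g (r, c) else 0) = (\<Sum>e\<in>{e\<in>E. fst e = r}. g e)"
proof -
  have "(\<Sum>c\<in>C. if (r, c) \<in> E then g (r, c) else 0) = (\<Sum>c\<in>{c\<in>C. (r, c) \<in> E}. g (r, c))"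
    using assms by (simp add: sum.inter_filter)
  also have "\<dots> = (\<Sum>e\<in>Pair r ` {c\<in>C. (r, c) \<in> E}. g e)"
    by (subst sum.reindex) (auto simp: inj_on_def)
  also have "Pair r ` {c\<in>C. (r, c) \<in> E} = {e\<in>E. fst e = r}"
    using assms by force
  finally show ?thesis .
qed

lemma sum_column_of_subset_Times:
  assumes "E \<subseteq> R \<times> C" "finite R"
  shows "(\<Sum>r\<in>R. if (r, c) \<in> E then g (r, c) else 0) = (\<Sum>e\<in>{e\<in>E. snd e = c}. g e)"
proof -
  have "(\<Sum>r\<in>R. if (r, c) \<in> E then g (r, c) else 0) = (\<Sum>r\<in>{r\<in>R. (r, c) \<in> E}. g (r, c))"
    using assms by (simp add: sum.inter_filter)
  also have "\<dots> = (\<Sum>e\<in>(\<lambda>r. (r, c)) ` {r\<in>R. (r, c) \<in> E}. g e)"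
    by (subst sum.reindex) (auto simp: inj_on_def)
  also have "(\<lambda>r. (r, c)) ` {r\<in>R. (r, c) \<in> E} = {e\<in>E. snd e = c}"
    using assms by force
  finally show ?thesis .
qed

lemma card_image_le_half_card:
  assumes "finite E" and "\<And>y. y \<in> f ` E \<Longrightarrow> 2 \<le> card {e\<in>E. f e = y}"
  shows "2 * card (f ` E) \<le> card E"
proof -
  have "2 * card (f ` E) = (\<Sum>y\<in>f ` E. 2)" by simp
  also have "\<dots> \<le> (\<Sum>y\<in>f ` E. card {e\<in>E. f e = y})" by (rule sum_mono) (rule assms(2))
  also have "\<dots> = card E"
    using sum.group[OF assms(1), of "f ` E" f "\<lambda>_. 1::nat"] assms(1) by simp
  finally show ?thesis .
qed

lemma card_lines_le_card_support:
  fixes E :: "('a \<times> 'b) set"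
  assumes fin: "finite R" "finite C" and E: "E \<subseteq> R \<times> C"
    and rows: "\<And>r. r \<in> R \<Longrightarrow> card {c\<in>C. (r, c) \<in> E} \<noteq> 1"
    and cols: "\<And>c. c \<in> C \<Longrightarrow> card {r\<in>R. (r, c) \<in> E} \<noteq> 1"
  shows "card (fst ` E) + card (snd ` E) \<le> card E"
proof -
  have fE: "finite E" using fin E by (meson finite_SigmaI finite_subset)
  have "2 * card (fst ` E) \<le> card E"
  proof (rule card_image_le_half_card[OF fE])
    fix r assume r: "r \<in> fst ` E"
    have "{e\<in>E. fst e = r} = Pair r ` {c\<in>C. (r, c) \<in> E}" using E by force
    then have "card {e\<in>E. fst e = r} = card {c\<in>C. (r, c) \<in> E}" by (simp add: card_image inj_on_def)
    moreover have r': "r \<in> R" "{c\<in>C. (r, c) \<in> E} \<noteq> {}" using r E by force+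
    moreover have "card {c\<in>C. (r, c) \<in> E} \<noteq> 0" using r' fin(2) by simp
    ultimately show "2 \<le> card {e\<in>E. fst e = r}" using rows[of r] by linarith
  qed
  moreover have "2 * card (snd ` E) \<le> card E"
  proof (rule card_image_le_half_card[OF fE])
    fix c assume c: "c \<in> snd ` E"
    have "{e\<in>E. snd e = c} = (\<lambda>r. (r, c)) ` {r\<in>R. (r, c) \<in> E}" using E by force
    then have "card {e\<in>E. snd e = c} = card {r\<in>R. (r, c) \<in> E}" by (simp add: card_image inj_on_def)
    moreover have c': "c \<in> C" "{r\<in>R. (r, c) \<in> E} \<noteq> {}" using c E by force+
    moreover have "card {r\<in>R. (r, c) \<in> E} \<noteq> 0" using c' fin(1) by simp
    ultimately show "2 \<le> card {e\<in>E. snd e = c}" using cols[of c] by linarith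
  qed
  ultimately show ?thesis by linarith
qed

lemma redundant_column_sum:
  fixes x :: "'a \<times> 'b \<Rightarrow> real"
  assumes fE: "finite E" and rows: "\<And>r. (\<Sum>e\<in>{e\<in>E. fst e = r}. x e) = 0"
    and other_columns: "\<And>c. c \<noteq> c0 \<Longrightarrow> (\<Sum>e\<in>{e\<in>E. snd e = c}. x e) = 0"
  shows "(\<Sum>e\<in>{e\<in>E. snd e = c0}. x e) = 0"
proof -
  have "(\<Sum>e\<in>E. x e) = (\<Sum>r\<in>fst ` E. \<Sum>e\<in>{e\<in>E. fst e = r}. x e)"
    by (rule sum.group[symmetric]) (use fE in auto)
  also have "\<dots> = 0" by (simp add: rows)
  finally have "(\<Sum>e\<in>E. x e) = 0" .
  moreover have "(\<Sum>e\<in>E. x e) = (\<Sum>c\<in>insert c0 (snd ` E). \<Sum>e\<in>{e\<in>E. snd e = c}. x e)"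
    by (rule sum.group[symmetric]) (use fE in auto)
  moreover have "\<dots> = (\<Sum>e\<in>{e\<in>E. snd e = c0}. x e) + (\<Sum>c\<in>snd ` E - {c0}. \<Sum>e\<in>{e\<in>E. snd e = c}. x e)"
    by (rule sum.insert_remove) (use fE in simp)
  moreover have "(\<Sum>c\<in>snd ` E - {c0}. \<Sum>e\<in>{e\<in>E. snd e = c}. x e) = 0"
    using other_columns by (intro sum.neutral) auto
  ultimately show ?thesis by simp
qed

text \<open>There are more unknowns (the entries of \<open>E\<close>) than independent linear constraints: one per
  row and column met by \<open>E\<close>, minus one since the total sum is counted twice.\<close>
lemma exists_zero_fibre_sums:
  fixes E :: "('a \<times> 'b) set"
  assumes fE: "finite E" and "E \<noteq> {}" and card_E: "card (fst ` E) + card (snd ` E) \<le> card E"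
  shows "\<exists>x :: 'a \<times> 'b \<Rightarrow> real. (\<exists>e\<in>E. x e \<noteq> 0) \<and>
    (\<forall>r. (\<Sum>e\<in>{e\<in>E. fst e = r}. x e) = 0) \<and> (\<forall>c. (\<Sum>e\<in>{e\<in>E. snd e = c}. x e) = 0)"
proof -
  obtain c0 where c0: "c0 \<in> snd ` E" using \<open>E \<noteq> {}\<close> by blast
  define Q where "Q = Inl ` fst ` E \<union> Inr ` (snd ` E - {c0})"
  have "card Q \<le> card (fst ` E) + card (snd ` E - {c0})"
    unfolding Q_def using card_Un_le[of "Inl ` fst ` E" "Inr ` (snd ` E - {c0})"]
    by (simp add: card_image)
  also have "\<dots> < card E"
  proof -
    have "card (snd ` E) > 0" using c0 fE by (auto simp: card_gt_0_iff)
    moreover have "card (snd ` E - {c0}) = card (snd ` E) - 1" using c0 fE by simp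
    ultimately show ?thesis using card_E by linarith
  qed
  finally have "card Q < card E" .
  define a :: "'a + 'b \<Rightarrow> 'a \<times> 'b \<Rightarrow> real"
    where "a q e = (case q of Inl r \<Rightarrow> of_bool (fst e = r) | Inr c \<Rightarrow> of_bool (snd e = c))"
    for q e
  obtain x where x: "\<exists>e\<in>E. x e \<noteq> 0" "\<forall>q\<in>Q. (\<Sum>e\<in>E. a q e * x e) = 0"
    using homogeneous_system_nontrivial_solution[of Q E a] fE \<open>card Q < card E\<close>
    by (auto simp: Q_def)
  have rows: "(\<Sum>e\<in>{e\<in>E. fst e = r}. x e) = 0" for r
  proof (cases "r \<in> fst ` E")
    case True
    then have "(\<Sum>e\<in>E. a (Inl r) e * x e) = 0" using x(2) by (simp add: Q_def)
    moreover have "(\<Sum>e\<in>E. a (Inl r) e * x e) = (\<Sum>e\<in>{e\<in>E. fst e = r}. x e)"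
      unfolding a_def sum.inter_filter[OF fE] by (intro sum.cong) auto
    ultimately show ?thesis by simp
  next
    case False
    then have "{e\<in>E. fst e = r} = {}" by force
    then show ?thesis by (simp only: sum.empty)
  qed
  have other_columns: "(\<Sum>e\<in>{e\<in>E. snd e = c}. x e) = 0" if "c \<noteq> c0" for c
  proof (cases "c \<in> snd ` E")
    case True
    then have "(\<Sum>e\<in>E. a (Inr c) e * x e) = 0" using x(2) that by (simp add: Q_def)
    moreover have "(\<Sum>e\<in>E. a (Inr c) e * x e) = (\<Sum>e\<in>{e\<in>E. snd e = c}. x e)"
      unfolding a_def sum.inter_filter[OF fE] by (intro sum.cong) auto
    ultimately show ?thesis by simp
  next
    case False
    then have "{e\<in>E. snd e = c} = {}" by force
    then show ?thesis by (simp only: sum.empty)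
  qed
  have "(\<Sum>e\<in>{e\<in>E. snd e = c0}. x e) = 0"
    by (rule redundant_column_sum[OF fE rows other_columns])
  then have "(\<Sum>e\<in>{e\<in>E. snd e = c}. x e) = 0" for c
    using other_columns by (cases "c = c0") auto
  then show ?thesis using x(1) rows by blast
qed

lemma exists_zero_margin_matrix:
  fixes E :: "('a \<times> 'b) set"
  assumes fin: "finite R" "finite C" and E: "E \<subseteq> R \<times> C" "E \<noteq> {}"
    and rows: "\<And>r. r \<in> R \<Longrightarrow> card {c\<in>C. (r, c) \<in> E} \<noteq> 1"
    and cols: "\<And>c. c \<in> C \<Longrightarrow> card {r\<in>R. (r, c) \<in> E} \<noteq> 1"
  shows "\<exists>D :: 'a \<Rightarrow> 'b \<Rightarrow> real. (\<forall>r c. D r c \<noteq> 0 \<longrightarrow> (r, c) \<in> E) \<and> (\<exists>r c. D r c \<noteq> 0) \<and>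
    (\<forall>r\<in>R. (\<Sum>c\<in>C. D r c) = 0) \<and> (\<forall>c\<in>C. (\<Sum>r\<in>R. D r c) = 0)"
proof -
  have fE: "finite E" using fin E by (meson finite_SigmaI finite_subset)
  have "card (fst ` E) + card (snd ` E) \<le> card E"
    using fin E(1) rows cols by (rule card_lines_le_card_support)
  then obtain x :: "'a \<times> 'b \<Rightarrow> real" where x: "\<exists>e\<in>E. x e \<noteq> 0"
    "\<forall>r. (\<Sum>e\<in>{e\<in>E. fst e = r}. x e) = 0"
    "\<forall>c. (\<Sum>e\<in>{e\<in>E. snd e = c}. x e) = 0"
    using exists_zero_fibre_sums[OF fE E(2)] by blast
  define D where "D r c = (if (r, c) \<in> E then x (r, c) else 0)" for r c
  have "(\<Sum>c\<in>C. D r c) = 0" "(\<Sum>r\<in>R. D r c) = 0" for r c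
    using x(2,3) by (simp_all add: D_def sum_row_of_subset_Times[OF E(1) fin(2)]
        sum_column_of_subset_Times[OF E(1) fin(1)])
  moreover have "\<exists>r c. D r c \<noteq> 0" using x(1) by (auto simp: D_def)
  ultimately show ?thesis by (intro exI[of _ D]) (auto simp: D_def)
qed

lemma exists_step_to_boundary:
  fixes a d lo hi :: "'e \<Rightarrow> real"
  assumes "finite S" "S \<noteq> {}"
    and inside: "\<And>e. e \<in> S \<Longrightarrow> lo e < a e \<and> a e < hi e \<and> d e \<noteq> 0"
  obtains t where "t > 0" "\<And>e. e \<in> S \<Longrightarrow> lo e \<le> a e + t * d e \<and> a e + t * d e \<le> hi e"
    "\<exists>e\<in>S. a e + t * d e \<in> {lo e, hi e}"
proof -
  define \<tau> where "\<tau> e = (if d e > 0 then hi e - a e else lo e - a e) / d e" for e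
  have \<tau>_pos: "\<tau> e > 0" if "e \<in> S" for e
    using inside[OF that] by (auto simp: \<tau>_def divide_neg_neg)
  have \<tau>_hits_boundary: "a e + \<tau> e * d e \<in> {lo e, hi e}" if "e \<in> S" for e
    using inside[OF that] by (auto simp: \<tau>_def)
  define t where "t = Min (\<tau> ` S)"
  have "t \<in> \<tau> ` S" unfolding t_def using assms(1,2) by (intro Min_in) auto
  then obtain e0 where e0: "e0 \<in> S" "\<tau> e0 = t" by auto
  have t_le: "t \<le> \<tau> e" if "e \<in> S" for e
    using assms(1) that by (simp add: t_def)
  have "t > 0" using \<tau>_pos e0 by auto
  show thesis
  proof (rule that)
    show "t > 0" by fact
    show "\<exists>e\<in>S. a e + t * d e \<in> {lo e, hi e}" using \<tau>_hits_boundary e0 by metis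
  next
    fix e assume e: "e \<in> S"
    show "lo e \<le> a e + t * d e \<and> a e + t * d e \<le> hi e"
    proof (cases "d e > 0")
      case True
      then have "t * d e \<le> hi e - a e" and "0 < t * d e"
        using mult_right_mono[OF t_le[OF e], of "d e"] \<open>t > 0\<close> by (auto simp: \<tau>_def)
      then show ?thesis using inside[OF e] by linarith
    next
      case False
      then have "d e < 0" using inside[OF e] by linarith
      then have "lo e - a e \<le> t * d e" and "t * d e < 0"
        using mult_right_mono_neg[OF t_le[OF e], of "d e"] \<open>t > 0\<close>
        by (auto simp: \<tau>_def mult_pos_neg)
      then show ?thesis using inside[OF e] by linarith
    qed
  qed
qed

lemma card_nonintegral_summands_ne_1:
  fixes f :: "'a \<Rightarrow> real"
  assumes "finite C" "(\<Sum>c\<in>C. f c) \<in> \<int>"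
  shows "card {c\<in>C. f c \<notin> \<int>} \<noteq> 1"
proof
  assume "card {c\<in>C. f c \<notin> \<int>} = 1"
  then obtain c0 where c0: "{c\<in>C. f c \<notin> \<int>} = {c0}" by (rule card_1_singletonE)
  have "(\<Sum>c\<in>C - {c0}. f c) \<in> \<int>" by (rule Ints_sum) (use c0 in blast)
  moreover have "(\<Sum>c\<in>C. f c) = f c0 + (\<Sum>c\<in>C - {c0}. f c)"
    using c0 assms(1) by (auto intro: sum.remove)
  ultimately have "f c0 \<in> \<int>" using assms(2) by (metis Ints_diff add_diff_cancel_right')
  then show False using c0 by blast
qed

lemma nonintegral_floor_ceiling:
  fixes x :: real
  assumes "x \<notin> \<int>"
  shows "of_int \<lfloor>x\<rfloor> < x" "x < of_int \<lceil>x\<rceil>"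
  using assms of_int_floor_le[of x] le_of_int_ceiling[of x]
  by (metis Ints_of_int order.not_eq_order_implies_strict)+

lemma exists_zero_margin_matrix_on_nonintegral:
  fixes A :: "'a \<Rightarrow> 'b \<Rightarrow> real"
  assumes fin: "finite R" "finite C"
    and rows: "\<forall>r\<in>R. (\<Sum>c\<in>C. A r c) \<in> \<int>" and cols: "\<forall>c\<in>C. (\<Sum>r\<in>R. A r c) \<in> \<int>"
    and nonintegral: "{(r, c) \<in> R \<times> C. A r c \<notin> \<int>} \<noteq> {}"
  shows "\<exists>D :: 'a \<Rightarrow> 'b \<Rightarrow> real. (\<forall>r c. D r c \<noteq> 0 \<longrightarrow> (r, c) \<in> R \<times> C \<and> A r c \<notin> \<int>) \<and>
    (\<exists>r c. D r c \<noteq> 0) \<and> (\<forall>r\<in>R. (\<Sum>c\<in>C. D r c) = 0) \<and> (\<forall>c\<in>C. (\<Sum>r\<in>R. D r c) = 0)"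
proof -
  define E where "E = {(r, c) \<in> R \<times> C. A r c \<notin> \<int>}"
  have "card {c\<in>C. (r, c) \<in> E} \<noteq> 1" if "r \<in> R" for r
    using card_nonintegral_summands_ne_1[OF fin(2), of "A r"] rows that by (simp add: E_def)
  moreover have "card {r\<in>R. (r, c) \<in> E} \<noteq> 1" if "c \<in> C" for c
    using card_nonintegral_summands_ne_1[OF fin(1), of "\<lambda>r. A r c"] cols that by (simp add: E_def)
  moreover have "E \<subseteq> R \<times> C" "E \<noteq> {}" using nonintegral by (auto simp: E_def)
  ultimately show ?thesis
    using exists_zero_margin_matrix[OF fin, of E] unfolding E_def by blast
qed

text \<open>Move along \<open>D\<close> until one more entry becomes integral.\<close>
lemma matrix_rounding_step:
  fixes A D :: "'a \<Rightarrow> 'b \<Rightarrow> real"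
  assumes fin: "finite R" "finite C"
    and D_support: "\<forall>r c. D r c \<noteq> 0 \<longrightarrow> (r, c) \<in> R \<times> C \<and> A r c \<notin> \<int>"
    and D_nonzero: "\<exists>r c. D r c \<noteq> 0"
    and D_margins: "\<forall>r\<in>R. (\<Sum>c\<in>C. D r c) = 0" "\<forall>c\<in>C. (\<Sum>r\<in>R. D r c) = 0"
  obtains B where "\<forall>r\<in>R. (\<Sum>c\<in>C. B r c) = (\<Sum>c\<in>C. A r c)"
    "\<forall>c\<in>C. (\<Sum>r\<in>R. B r c) = (\<Sum>r\<in>R. A r c)"
    "\<forall>r\<in>R. \<forall>c\<in>C. of_int \<lfloor>A r c\<rfloor> \<le> B r c \<and> B r c \<le> of_int \<lceil>A r c\<rceil>"
    "{(r, c) \<in> R \<times> C. B r c \<notin> \<int>} \<subset> {(r, c) \<in> R \<times> C. A r c \<notin> \<int>}"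
proof -
  define S where "S = {(r, c). D r c \<noteq> 0}"
  have "S \<subseteq> R \<times> C" using D_support by (auto simp: S_def)
  then have "finite S" using fin by (meson finite_SigmaI finite_subset)
  moreover have "S \<noteq> {}" using D_nonzero by (auto simp: S_def)
  moreover have "of_int \<lfloor>A (fst e) (snd e)\<rfloor> < A (fst e) (snd e) \<and>
      A (fst e) (snd e) < of_int \<lceil>A (fst e) (snd e)\<rceil> \<and> D (fst e) (snd e) \<noteq> 0" if "e \<in> S" for e
    using that D_support nonintegral_floor_ceiling[of "A (fst e) (snd e)"] by (auto simp: S_def)
  ultimately obtain t where t: "t > 0"
    "\<And>e. e \<in> S \<Longrightarrow> of_int \<lfloor>A (fst e) (snd e)\<rfloor> \<le> A (fst e) (snd e) + t * D (fst e) (snd e) \<and>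
       A (fst e) (snd e) + t * D (fst e) (snd e) \<le> of_int \<lceil>A (fst e) (snd e)\<rceil>"
    "\<exists>e\<in>S. A (fst e) (snd e) + t * D (fst e) (snd e) \<in>
       {of_int \<lfloor>A (fst e) (snd e)\<rfloor>, of_int \<lceil>A (fst e) (snd e)\<rceil>}"
    by (rule exists_step_to_boundary[where S=S]) (auto simp del: insert_iff)
  define B where "B r c = A r c + t * D r c" for r c
  show thesis
  proof (rule that)
    show "\<forall>r\<in>R. (\<Sum>c\<in>C. B r c) = (\<Sum>c\<in>C. A r c)" "\<forall>c\<in>C. (\<Sum>r\<in>R. B r c) = (\<Sum>r\<in>R. A r c)"
      using D_margins by (simp_all add: B_def sum.distrib flip: sum_distrib_left)
    show "\<forall>r\<in>R. \<forall>c\<in>C. of_int \<lfloor>A r c\<rfloor> \<le> B r c \<and> B r c \<le> of_int \<lceil>A r c\<rceil>"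
    proof (intro ballI)
      fix r c
      show "of_int \<lfloor>A r c\<rfloor> \<le> B r c \<and> B r c \<le> of_int \<lceil>A r c\<rceil>"
        using t(2)[of "(r, c)"] by (cases "D r c = 0") (simp_all add: B_def S_def le_of_int_ceiling)
    qed
    have "A r c \<notin> \<int>" if "B r c \<notin> \<int>" for r c
      using that D_support by (cases "D r c = 0") (auto simp: B_def)
    moreover obtain r0 c0 where "D r0 c0 \<noteq> 0" "B r0 c0 \<in> \<int>"
      using t(3) by (force simp: B_def S_def)
    ultimately show "{(r, c) \<in> R \<times> C. B r c \<notin> \<int>} \<subset> {(r, c) \<in> R \<times> C. A r c \<notin> \<int>}"
      using D_support by blast
  qed
qed

lemma int_between_floor_ceiling:
  fixes x :: real and z :: int
  assumes "\<lfloor>x\<rfloor> \<le> z" "z \<le> \<lceil>x\<rceil>"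
  shows "z \<in> {\<lfloor>x\<rfloor>, \<lceil>x\<rceil>}"
  using assms ceiling_diff_floor_le_1[of x] by auto

lemma matrix_rounding:
  fixes A :: "'a \<Rightarrow> 'b \<Rightarrow> real"
  assumes fin: "finite R" "finite C"
    and "\<forall>r\<in>R. (\<Sum>c\<in>C. A r c) \<in> \<int>" "\<forall>c\<in>C. (\<Sum>r\<in>R. A r c) \<in> \<int>"
  shows "\<exists>X. (\<forall>r\<in>R. \<forall>c\<in>C. X r c \<in> {\<lfloor>A r c\<rfloor>, \<lceil>A r c\<rceil>}) \<and>
    (\<forall>r\<in>R. (\<Sum>c\<in>C. of_int (X r c)) = (\<Sum>c\<in>C. A r c)) \<and>
    (\<forall>c\<in>C. (\<Sum>r\<in>R. of_int (X r c)) = (\<Sum>r\<in>R. A r c))"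
  using assms(3,4)
proof (induction "card {(r, c) \<in> R \<times> C. A r c \<notin> \<int>}" arbitrary: A rule: less_induct)
  case less
  show ?case
  proof (cases "{(r, c) \<in> R \<times> C. A r c \<notin> \<int>} = {}")
    case True
    then have "of_int \<lfloor>A r c\<rfloor> = A r c" if "r \<in> R" "c \<in> C" for r c
      using that by (auto elim!: Ints_cases)
    then show ?thesis by (intro exI[of _ "\<lambda>r c. \<lfloor>A r c\<rfloor>"]) (auto intro!: sum.cong)
  next
    case False
    obtain D :: "'a \<Rightarrow> 'b \<Rightarrow> real" where
      "\<forall>r c. D r c \<noteq> 0 \<longrightarrow> (r, c) \<in> R \<times> C \<and> A r c \<notin> \<int>" "\<exists>r c. D r c \<noteq> 0"
      "\<forall>r\<in>R. (\<Sum>c\<in>C. D r c) = 0" "\<forall>c\<in>C. (\<Sum>r\<in>R. D r c) = 0"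
      using exists_zero_margin_matrix_on_nonintegral[OF fin less.prems False] by blast
    then obtain B where B: "\<forall>r\<in>R. (\<Sum>c\<in>C. B r c) = (\<Sum>c\<in>C. A r c)"
      "\<forall>c\<in>C. (\<Sum>r\<in>R. B r c) = (\<Sum>r\<in>R. A r c)"
      "\<forall>r\<in>R. \<forall>c\<in>C. of_int \<lfloor>A r c\<rfloor> \<le> B r c \<and> B r c \<le> of_int \<lceil>A r c\<rceil>"
      "{(r, c) \<in> R \<times> C. B r c \<notin> \<int>} \<subset> {(r, c) \<in> R \<times> C. A r c \<notin> \<int>}"
      by (rule matrix_rounding_step[OF fin]) blast
    have "card {(r, c) \<in> R \<times> C. B r c \<notin> \<int>} < card {(r, c) \<in> R \<times> C. A r c \<notin> \<int>}"
      using B(4) fin by (intro psubset_card_mono) (auto intro: finite_subset[of _ "R \<times> C"])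
    then obtain X where X: "\<forall>r\<in>R. \<forall>c\<in>C. X r c \<in> {\<lfloor>B r c\<rfloor>, \<lceil>B r c\<rceil>}"
      "\<forall>r\<in>R. (\<Sum>c\<in>C. of_int (X r c)) = (\<Sum>c\<in>C. B r c)"
      "\<forall>c\<in>C. (\<Sum>r\<in>R. of_int (X r c)) = (\<Sum>r\<in>R. B r c)"
      using less.hyps[of B] less.prems B(1,2) by auto
    have "X r c \<in> {\<lfloor>A r c\<rfloor>, \<lceil>A r c\<rceil>}" if "r \<in> R" "c \<in> C" for r c
    proof (rule int_between_floor_ceiling)
      have "\<lfloor>A r c\<rfloor> \<le> \<lfloor>B r c\<rfloor>" "\<lceil>B r c\<rceil> \<le> \<lceil>A r c\<rceil>"
        using B(3) that by (auto simp: le_floor_iff ceiling_le_iff)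
      moreover have "X r c = \<lfloor>B r c\<rfloor> \<or> X r c = \<lceil>B r c\<rceil>" using X(1) that by blast
      ultimately show "\<lfloor>A r c\<rfloor> \<le> X r c" "X r c \<le> \<lceil>A r c\<rceil>"
        using floor_le_ceiling[of "B r c"] by linarith+
    qed
    then show ?thesis using X(2,3) B(1,2) by (intro exI[of _ X]) simp
  qed
qed

lemma rounding_dist_less_1:
  fixes y :: real
  assumes "z \<in> {\<lfloor>y\<rfloor>, \<lceil>y\<rceil>}"
  shows "\<bar>of_int z - y\<bar> < 1"
proof -
  have "z = \<lfloor>y\<rfloor> \<or> z = \<lceil>y\<rceil>" using assms by simp
  then show ?thesis unfolding abs_less_iff by linarith
qed

lemma sum_insert_None_image_Some:
  fixes f :: "'a option \<Rightarrow> 'b :: comm_monoid_add"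
  assumes "finite R"
  shows "(\<Sum>r'\<in>insert None (Some ` R). f r') = f None + (\<Sum>r\<in>R. f (Some r))"
  using assms by (simp add: sum.reindex)

text \<open>The extra row and column \<open>None\<close> fill every row and column sum of \<open>A\<close> up to the next
  integer.\<close>
definition bordered :: "'a set \<Rightarrow> 'b set \<Rightarrow> ('a \<Rightarrow> 'b \<Rightarrow> real) \<Rightarrow> 'a option \<Rightarrow> 'b option \<Rightarrow> real"
  where "bordered R C A r' c' = (case (r', c') of
      (Some r, Some c) \<Rightarrow> A r c
    | (Some r, None) \<Rightarrow> of_int \<lceil>\<Sum>c\<in>C. A r c\<rceil> - (\<Sum>c\<in>C. A r c)
    | (None, Some c) \<Rightarrow> of_int \<lceil>\<Sum>r\<in>R. A r c\<rceil> - (\<Sum>r\<in>R. A r c)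
    | (None, None) \<Rightarrow> (let T = (\<Sum>r\<in>R. of_int \<lceil>\<Sum>c\<in>C. A r c\<rceil> - (\<Sum>c\<in>C. A r c)) in of_int \<lceil>T\<rceil> - T))"

lemma bordered_margins:
  fixes A :: "'a \<Rightarrow> 'b \<Rightarrow> real"
  assumes fin: "finite R" "finite C"
  shows "(\<Sum>c'\<in>insert None (Some ` C). bordered R C A (Some r) c') = of_int \<lceil>\<Sum>c\<in>C. A r c\<rceil>"
    and "(\<Sum>r'\<in>insert None (Some ` R). bordered R C A r' (Some c)) = of_int \<lceil>\<Sum>r\<in>R. A r c\<rceil>"
    and "(\<Sum>c'\<in>insert None (Some ` C). bordered R C A r' c') \<in> \<int>"
    and "(\<Sum>r'\<in>insert None (Some ` R). bordered R C A r' c') \<in> \<int>"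
proof -
  note sums = sum_insert_None_image_Some[OF fin(1)] sum_insert_None_image_Some[OF fin(2)]
  show row: "(\<Sum>c'\<in>insert None (Some ` C). bordered R C A (Some r) c') = of_int \<lceil>\<Sum>c\<in>C. A r c\<rceil>" for r
    by (simp add: sums bordered_def)
  show column: "(\<Sum>r'\<in>insert None (Some ` R). bordered R C A r' (Some c)) = of_int \<lceil>\<Sum>r\<in>R. A r c\<rceil>" for c
    by (simp add: sums bordered_def)
  have "(\<Sum>r\<in>R. \<Sum>c\<in>C. A r c) = (\<Sum>c\<in>C. \<Sum>r\<in>R. A r c)" by (rule sum.swap)
  then have "(\<Sum>c'\<in>insert None (Some ` C). bordered R C A None c') =
      of_int (\<lceil>\<Sum>r\<in>R. of_int \<lceil>\<Sum>c\<in>C. A r c\<rceil> - (\<Sum>c\<in>C. A r c)\<rceil> - (\<Sum>r\<in>R. \<lceil>\<Sum>c\<in>C. A r c\<rceil>) +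
        (\<Sum>c\<in>C. \<lceil>\<Sum>r\<in>R. A r c\<rceil>))"
    by (simp add: sums bordered_def Let_def sum_subtractf)
  then show "(\<Sum>c'\<in>insert None (Some ` C). bordered R C A r' c') \<in> \<int>"
    using row by (cases r') (simp_all only: Ints_of_int)
  have "(\<Sum>r'\<in>insert None (Some ` R). bordered R C A r' None) =
      of_int \<lceil>\<Sum>r\<in>R. of_int \<lceil>\<Sum>c\<in>C. A r c\<rceil> - (\<Sum>c\<in>C. A r c)\<rceil>"
    by (simp add: sums bordered_def Let_def)
  then show "(\<Sum>r'\<in>insert None (Some ` R). bordered R C A r' c') \<in> \<int>"
    using column by (cases c') (simp_all only: Ints_of_int)
qed

lemma matrix_rounding_approx_margins:
  fixes A :: "'a \<Rightarrow> 'b \<Rightarrow> real"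
  assumes fin: "finite R" "finite C"
  shows "\<exists>X. (\<forall>r\<in>R. \<forall>c\<in>C. X r c \<in> {\<lfloor>A r c\<rfloor>, \<lceil>A r c\<rceil>}) \<and>
    (\<forall>r\<in>R. \<bar>(\<Sum>c\<in>C. of_int (X r c)) - (\<Sum>c\<in>C. A r c)\<bar> < 1) \<and>
    (\<forall>c\<in>C. \<bar>(\<Sum>r\<in>R. of_int (X r c)) - (\<Sum>r\<in>R. A r c)\<bar> < 1)"
proof -
  define R' where "R' = insert None (Some ` R)"
  define C' where "C' = insert None (Some ` C)"
  define A' where "A' = bordered R C A"
  obtain Y where Y: "\<forall>r'\<in>R'. \<forall>c'\<in>C'. Y r' c' \<in> {\<lfloor>A' r' c'\<rfloor>, \<lceil>A' r' c'\<rceil>}"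
    "\<forall>r'\<in>R'. (\<Sum>c'\<in>C'. of_int (Y r' c')) = (\<Sum>c'\<in>C'. A' r' c')"
    "\<forall>c'\<in>C'. (\<Sum>r'\<in>R'. of_int (Y r' c')) = (\<Sum>r'\<in>R'. A' r' c')"
    using matrix_rounding[of R' C' A'] bordered_margins(3,4)[OF fin] fin
    by (auto simp: R'_def C'_def A'_def)
  define X where "X r c = Y (Some r) (Some c)" for r c
  have "\<bar>(\<Sum>c\<in>C. of_int (X r c)) - (\<Sum>c\<in>C. A r c)\<bar> < 1" if "r \<in> R" for r
  proof -
    have "of_int (Y (Some r) None) + (\<Sum>c\<in>C. of_int (X r c)) = (of_int \<lceil>\<Sum>c\<in>C. A r c\<rceil> :: real)"
      using Y(2) that bordered_margins(1)[OF fin, of A r] fin(2)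
      by (simp add: R'_def C'_def A'_def X_def sum.reindex)
    moreover have "\<bar>of_int (Y (Some r) None) - (of_int \<lceil>\<Sum>c\<in>C. A r c\<rceil> - (\<Sum>c\<in>C. A r c))\<bar> < 1"
      using Y(1) that by (intro rounding_dist_less_1) (auto simp: R'_def C'_def A'_def bordered_def)
    ultimately show ?thesis by linarith
  qed
  moreover have "\<bar>(\<Sum>r\<in>R. of_int (X r c)) - (\<Sum>r\<in>R. A r c)\<bar> < 1" if "c \<in> C" for c
  proof -
    have "of_int (Y None (Some c)) + (\<Sum>r\<in>R. of_int (X r c)) = (of_int \<lceil>\<Sum>r\<in>R. A r c\<rceil> :: real)"
      using Y(3) that bordered_margins(2)[OF fin, of A c] fin(1)
      by (simp add: R'_def C'_def A'_def X_def sum.reindex)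
    moreover have "\<bar>of_int (Y None (Some c)) - (of_int \<lceil>\<Sum>r\<in>R. A r c\<rceil> - (\<Sum>r\<in>R. A r c))\<bar> < 1"
      using Y(1) that by (intro rounding_dist_less_1) (auto simp: R'_def C'_def A'_def bordered_def)
    ultimately show ?thesis by linarith
  qed
  moreover have "\<forall>r\<in>R. \<forall>c\<in>C. X r c \<in> {\<lfloor>A r c\<rfloor>, \<lceil>A r c\<rceil>}"
    using Y(1) by (auto simp: X_def R'_def C'_def A'_def bordered_def)
  ultimately show ?thesis by blast
qed

lemma matrix_rounding_by_labels:
  fixes A :: "'a \<Rightarrow> 'b \<Rightarrow> real" and label :: "'a \<Rightarrow> 'b \<Rightarrow> 'k"
  assumes fin: "finite R" "finite C"
  shows "\<exists>X. (\<forall>r\<in>R. \<forall>c\<in>C. X r c \<in> {\<lfloor>A r c\<rfloor>, \<lceil>A r c\<rceil>}) \<and>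
    (\<forall>k. \<forall>r\<in>R. \<bar>\<Sum>c\<in>{c\<in>C. label r c = k}. of_int (X r c) - A r c\<bar> < 1) \<and>
    (\<forall>k. \<forall>c\<in>C. \<bar>\<Sum>r\<in>{r\<in>R. label r c = k}. of_int (X r c) - A r c\<bar> < 1)"
proof -
  define A_of where "A_of k r c = (if label r c = k then A r c else 0)" for k r c
  obtain Y where Y: "\<And>k. \<forall>r\<in>R. \<forall>c\<in>C. Y k r c \<in> {\<lfloor>A_of k r c\<rfloor>, \<lceil>A_of k r c\<rceil>}"
    "\<And>k. \<forall>r\<in>R. \<bar>(\<Sum>c\<in>C. of_int (Y k r c)) - (\<Sum>c\<in>C. A_of k r c)\<bar> < 1"
    "\<And>k. \<forall>c\<in>C. \<bar>(\<Sum>r\<in>R. of_int (Y k r c)) - (\<Sum>r\<in>R. A_of k r c)\<bar> < 1"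
    using matrix_rounding_approx_margins[OF fin, of "A_of _"] by metis
  define X where "X r c = Y (label r c) r c" for r c
  have diff: "of_int (Y k r c) - A_of k r c = (if label r c = k then of_int (X r c) - A r c else 0)"
    if "r \<in> R" "c \<in> C" for k r c
    using Y(1)[of k, rule_format, OF that] by (auto simp: X_def A_of_def)
  have "\<bar>\<Sum>c\<in>{c\<in>C. label r c = k}. of_int (X r c) - A r c\<bar> < 1" if "r \<in> R" for k r
  proof -
    have "(\<Sum>c\<in>{c\<in>C. label r c = k}. of_int (X r c) - A r c) =
        (\<Sum>c\<in>C. of_int (Y k r c) - A_of k r c)"
      using fin(2) that diff by (simp add: sum.inter_filter)
    then show ?thesis using Y(2)[of k] that by (simp add: sum_subtractf)
  qed
  moreover have "\<bar>\<Sum>r\<in>{r\<in>R. label r c = k}. of_int (X r c) - A r c\<bar> < 1" if "c \<in> C" for k c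
  proof -
    have "(\<Sum>r\<in>{r\<in>R. label r c = k}. of_int (X r c) - A r c) =
        (\<Sum>r\<in>R. of_int (Y k r c) - A_of k r c)"
      using fin(1) that diff by (simp add: sum.inter_filter)
    then show ?thesis using Y(3)[of k] that by (simp add: sum_subtractf)
  qed
  moreover have "X r c \<in> {\<lfloor>A r c\<rfloor>, \<lceil>A r c\<rceil>}" if "r \<in> R" "c \<in> C" for r c
    using Y(1)[of "label r c", rule_format, OF that] by (simp add: X_def A_of_def)
  ultimately show ?thesis by blast
qed

lemma sum_weighted_by_label_le_card:
  fixes f :: "'c \<Rightarrow> real" and w :: "'k \<Rightarrow> real" and label :: "'c \<Rightarrow> 'k"
  assumes "finite C" "finite K" "label ` C \<subseteq> K"
    and "\<And>k. k \<in> K \<Longrightarrow> 0 \<le> w k \<and> w k \<le> 1"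
    and "\<And>k. k \<in> K \<Longrightarrow> \<bar>\<Sum>c\<in>{c\<in>C. label c = k}. f c\<bar> < 1"
  shows "(\<Sum>c\<in>C. w (label c) * f c) \<le> card K"
proof -
  have "(\<Sum>c\<in>C. w (label c) * f c) = (\<Sum>k\<in>K. \<Sum>c\<in>{c\<in>C. label c = k}. w (label c) * f c)"
    using sum.group[OF assms(1-3), of "\<lambda>c. w (label c) * f c"] by simp
  also have "\<dots> = (\<Sum>k\<in>K. w k * (\<Sum>c\<in>{c\<in>C. label c = k}. f c))"
    by (simp add: sum_distrib_left)
  also have "\<dots> \<le> (\<Sum>k\<in>K. 1)"
  proof (rule sum_mono)
    fix k assume "k \<in> K"
    then have "w k * \<bar>\<Sum>c\<in>{c\<in>C. label c = k}. f c\<bar> \<le> 1"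
      using assms(4,5) by (intro mult_le_one) (auto simp: less_imp_le)
    moreover have "w k * (\<Sum>c\<in>{c\<in>C. label c = k}. f c) \<le> w k * \<bar>\<Sum>c\<in>{c\<in>C. label c = k}. f c\<bar>"
      using assms(4) \<open>k \<in> K\<close> by (intro mult_left_mono) auto
    ultimately show "w k * (\<Sum>c\<in>{c\<in>C. label c = k}. f c) \<le> 1" by linarith
  qed
  finally show ?thesis by simp
qed

section \<open>Rounding the number of direct arcs\<close>

text \<open>For a demand matrix with line sums \<open>5n/4\<close>, routing about \<open>direct_fraction\<close> of each demand
  directly needs at most \<open>99n/100 + O(1)\<close> direct arcs per vertex, and the residuals, each at most
  \<open>residual_allowance\<close> of the demand up to rounding errors, sum to \<open>49n/100 + O(1)\<close> per line.\<close>

definition direct_fraction :: real where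
  "direct_fraction = 99 / 125"

definition residual_allowance :: "real \<Rightarrow> real" where
  "residual_allowance x = 23 / 100 + 26 / 125 * x"

definition residual_class :: "real \<Rightarrow> nat" where
  "residual_class x =
     (if of_int \<lceil>direct_fraction * x\<rceil> \<le> x then 0 else nat \<lceil>100 * (x - of_int \<lfloor>x\<rfloor>)\<rceil>)"

definition class_weight :: "nat \<Rightarrow> real" where
  "class_weight k = (if k = 0 then 1 else real k / 100)"

lemma residual_class_le: "residual_class x \<le> 100"
proof -
  have "\<lceil>100 * (x - of_int \<lfloor>x\<rfloor>)\<rceil> \<le> 100"
    by (simp add: ceiling_le_iff) linarith
  then show ?thesis by (simp add: residual_class_def nat_le_iff)
qed

lemma class_weight_bounds: "k \<le> 100 \<Longrightarrow> 0 \<le> class_weight k \<and> class_weight k \<le> 1"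
  by (simp add: class_weight_def)

lemma quadratic_pos:
  fixes a b c x :: real
  assumes "a > 0" "b\<^sup>2 < 4 * a * c"
  shows "a * x\<^sup>2 + b * x + c > 0"
proof -
  have "a * x\<^sup>2 + b * x + c = a * (x + b / (2 * a))\<^sup>2 + (4 * a * c - b\<^sup>2) / (4 * a)"
    using assms(1) by (simp add: field_simps power2_eq_square)
  moreover have "a * (x + b / (2 * a))\<^sup>2 \<ge> 0" using assms(1) by simp
  moreover have "(4 * a * c - b\<^sup>2) / (4 * a) > 0" using assms by simp
  ultimately show ?thesis by linarith
qed

lemma shortfall_le_residual_allowance:
  fixes x :: real and k :: int
  assumes "k \<in> {0..3}"
  shows "(x - of_int k + 1 / 100) * (of_int k + 1 - direct_fraction * x) \<le> residual_allowance x"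
proof -
  define b :: real where "b = 26 / 125 - (of_int k + 1) + direct_fraction * (1 / 100 - of_int k)"
  define c :: real where "c = 23 / 100 - (1 / 100 - of_int k) * (of_int k + 1)"
  have "residual_allowance x - (x - of_int k + 1 / 100) * (of_int k + 1 - direct_fraction * x) =
      direct_fraction * x\<^sup>2 + b * x + c"
    unfolding residual_allowance_def b_def c_def power2_eq_square by (simp add: field_simps)
  moreover from assms have "k = 0 \<or> k = 1 \<or> k = 2 \<or> k = 3" by auto
  then have "b\<^sup>2 < 4 * direct_fraction * c"
    by (elim disjE) (simp_all add: b_def c_def direct_fraction_def power2_eq_square)
  then have "direct_fraction * x\<^sup>2 + b * x + c > 0"
    by (intro quadratic_pos) (simp_all add: direct_fraction_def)
  ultimately show ?thesis by linarith
qed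

lemma floor_direct_fraction_if_shortfall:
  fixes x :: real
  assumes "0 \<le> x" "x < of_int \<lceil>direct_fraction * x\<rceil>"
  shows "\<lfloor>direct_fraction * x\<rfloor> = \<lfloor>x\<rfloor>" "\<lceil>direct_fraction * x\<rceil> = \<lfloor>x\<rfloor> + 1"
    "of_int \<lfloor>x\<rfloor> < direct_fraction * x" "\<lfloor>x\<rfloor> \<in> {0..3}"
proof -
  define y where "y = direct_fraction * x"
  have "y \<le> x" using assms(1) by (simp add: y_def direct_fraction_def)
  have "y \<notin> \<int>"
  proof
    assume "y \<in> \<int>"
    then obtain n where "y = of_int n" by (auto elim: Ints_cases)
    then show False using assms(2) \<open>y \<le> x\<close> unfolding y_def[symmetric] by simp
  qed
  then have "\<lceil>y\<rceil> = \<lfloor>y\<rfloor> + 1" by (simp add: ceiling_altdef) (metis Ints_of_int)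
  moreover have "\<lfloor>x\<rfloor> = \<lfloor>y\<rfloor>"
  proof (rule floor_unique)
    show "of_int \<lfloor>y\<rfloor> \<le> x" using \<open>y \<le> x\<close> of_int_floor_le[of y] by linarith
    show "x < of_int \<lfloor>y\<rfloor> + 1" using assms(2) \<open>\<lceil>y\<rceil> = \<lfloor>y\<rfloor> + 1\<close> by (simp add: y_def)
  qed
  moreover have "of_int \<lfloor>x\<rfloor> < y" using \<open>\<lfloor>x\<rfloor> = \<lfloor>y\<rfloor>\<close> nonintegral_floor_ceiling(1)[OF \<open>y \<notin> \<int>\<close>] by simp
  ultimately show "\<lfloor>direct_fraction * x\<rfloor> = \<lfloor>x\<rfloor>" "\<lceil>direct_fraction * x\<rceil> = \<lfloor>x\<rfloor> + 1"
    "of_int \<lfloor>x\<rfloor> < direct_fraction * x"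
    by (simp_all add: y_def)
  have "x < of_int \<lfloor>x\<rfloor> + 1" using floor_correct[of x] by simp
  then have "of_int \<lfloor>x\<rfloor> < direct_fraction * (of_int \<lfloor>x\<rfloor> + 1)"
    using \<open>of_int \<lfloor>x\<rfloor> < y\<close> unfolding y_def direct_fraction_def distrib_left by linarith
  moreover have "r < 4" if "r < direct_fraction * (r + 1)" for r :: real
    using that unfolding direct_fraction_def by (simp add: distrib_left)
  ultimately have "real_of_int \<lfloor>x\<rfloor> < 4" by blast
  then have "\<lfloor>x\<rfloor> < 4" by (simp only: of_int_less_numeral_iff)
  then show "\<lfloor>x\<rfloor> \<in> {0..3}" using assms(1) by simp
qed

lemma class_weight_if_shortfall:
  fixes x :: real
  assumes "0 \<le> x" "x < of_int \<lceil>direct_fraction * x\<rceil>"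
  shows "x - of_int \<lfloor>x\<rfloor> \<le> class_weight (residual_class x)"
    "class_weight (residual_class x) < x - of_int \<lfloor>x\<rfloor> + 1 / 100"
proof -
  define j where "j = \<lceil>100 * (x - of_int \<lfloor>x\<rfloor>)\<rceil>"
  have "100 * (x - of_int \<lfloor>x\<rfloor>) \<le> of_int j" "of_int j < 100 * (x - of_int \<lfloor>x\<rfloor>) + 1"
    unfolding j_def using le_of_int_ceiling ceiling_correct[of "100 * (x - of_int \<lfloor>x\<rfloor>)"] by auto
  moreover have "of_int \<lfloor>x\<rfloor> < x"
    using floor_direct_fraction_if_shortfall(3,4)[OF assms] by (simp add: direct_fraction_def)
  then have "j \<ge> 1" by (simp add: j_def)
  moreover have "residual_class x = nat j" using assms(2) by (simp add: residual_class_def j_def)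
  ultimately show "x - of_int \<lfloor>x\<rfloor> \<le> class_weight (residual_class x)"
    "class_weight (residual_class x) < x - of_int \<lfloor>x\<rfloor> + 1 / 100"
    by (simp_all add: class_weight_def)
qed

text \<open>The weight depends only on the class of \<open>x\<close>, so summing this bound over a row or column
  of classwise rounded entries bounds the total residual there.\<close>
lemma residual_le_allowance:
  fixes x :: real and z :: int
  assumes "0 \<le> x" "z \<in> {\<lfloor>direct_fraction * x\<rfloor>, \<lceil>direct_fraction * x\<rceil>}"
  shows "max 0 (x - of_int z) \<le>
    residual_allowance x + class_weight (residual_class x) * (direct_fraction * x - of_int z)"
proof (cases "of_int \<lceil>direct_fraction * x\<rceil> \<le> x")
  case True
  moreover have "of_int \<lfloor>direct_fraction * x\<rfloor> \<le> x"
    using assms(1) of_int_floor_le[of "direct_fraction * x"] by (simp add: direct_fraction_def)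
  ultimately have "0 \<le> x - of_int z" using assms(2) by auto
  moreover have "x - direct_fraction * x \<le> residual_allowance x"
    by (simp add: residual_allowance_def direct_fraction_def)
  ultimately show ?thesis using True by (simp add: residual_class_def class_weight_def)
next
  case False
  define k where "k = \<lfloor>x\<rfloor>"
  define y where "y = direct_fraction * x"
  define w where "w = class_weight (residual_class x)"
  have k: "\<lfloor>y\<rfloor> = k" "\<lceil>y\<rceil> = k + 1" "of_int k < y" "k \<in> {0..3}"
    using floor_direct_fraction_if_shortfall[OF assms(1)] False by (simp_all add: k_def y_def)
  have w: "x - of_int k \<le> w" "w < x - of_int k + 1 / 100"
    using class_weight_if_shortfall[OF assms(1)] False by (simp_all add: k_def w_def)
  have "x < of_int k + 1" using False k(2) by (simp add: y_def)
  have "y < x" using k(3,4) by (simp add: y_def direct_fraction_def)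
  have "w * (of_int k + 1 - y) \<le> (x - of_int k + 1 / 100) * (of_int k + 1 - y)"
    using w(2) \<open>y < x\<close> \<open>x < of_int k + 1\<close> by (intro mult_right_mono) auto
  also have "\<dots> \<le> residual_allowance x"
    using shortfall_le_residual_allowance[OF k(4)] by (simp add: y_def)
  finally have key: "w * (of_int k + 1 - y) \<le> residual_allowance x" .
  from assms(2) k(1,2) have "z = k \<or> z = k + 1" by (auto simp: y_def)
  then show ?thesis
  proof
    assume "z = k"
    then show ?thesis using key w(1) k(3) \<open>y < x\<close> by (simp add: w_def y_def algebra_simps)
  next
    assume "z = k + 1"
    then show ?thesis using key \<open>x < of_int k + 1\<close> by (simp add: w_def y_def algebra_simps)
  qed
qed

lemma line_rounding_bounds:
  fixes y :: "'c \<Rightarrow> real" and z :: "'c \<Rightarrow> int"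
  assumes C: "finite C"
    and y: "\<forall>c\<in>C. 0 \<le> y c"
    and z: "\<forall>c\<in>C. z c \<in> {\<lfloor>direct_fraction * y c\<rfloor>, \<lceil>direct_fraction * y c\<rceil>}"
    and classes: "\<forall>k. \<bar>\<Sum>c\<in>{c\<in>C. residual_class (y c) = k}. of_int (z c) - direct_fraction * y c\<bar> < 1"
  shows "(\<Sum>c\<in>C. of_int (z c)) \<le> direct_fraction * (\<Sum>c\<in>C. y c) + 101"
    and "(\<Sum>c\<in>C. max 0 (y c - of_int (z c))) \<le> (\<Sum>c\<in>C. residual_allowance (y c)) + 101"
proof -
  define K where "K = {0..100::nat}"
  have K: "finite K" "card K = 101" "(\<lambda>c. residual_class (y c)) ` C \<subseteq> K"
    using residual_class_le by (auto simp: K_def)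
  have "(\<Sum>c\<in>C. 1 * (of_int (z c) - direct_fraction * y c)) \<le> card K"
    by (rule sum_weighted_by_label_le_card[OF C K(1,3)]) (use classes in auto)
  then show "(\<Sum>c\<in>C. of_int (z c)) \<le> direct_fraction * (\<Sum>c\<in>C. y c) + 101"
    using K(2) by (simp add: sum_subtractf sum_distrib_left)
  have "(\<Sum>c\<in>C. max 0 (y c - of_int (z c))) \<le>
      (\<Sum>c\<in>C. residual_allowance (y c) +
        class_weight (residual_class (y c)) * (direct_fraction * y c - of_int (z c)))"
    using y z by (intro sum_mono residual_le_allowance) auto
  also have "\<dots> = (\<Sum>c\<in>C. residual_allowance (y c)) +
      (\<Sum>c\<in>C. class_weight (residual_class (y c)) * (direct_fraction * y c - of_int (z c)))"
    by (rule sum.distrib)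
  also have "(\<Sum>c\<in>C. class_weight (residual_class (y c)) * (direct_fraction * y c - of_int (z c)))
      \<le> card K"
  proof (rule sum_weighted_by_label_le_card[OF C K(1,3)])
    show "0 \<le> class_weight k \<and> class_weight k \<le> 1" if "k \<in> K" for k
      using that class_weight_bounds by (simp add: K_def)
    show "\<bar>\<Sum>c\<in>{c\<in>C. residual_class (y c) = k}. direct_fraction * y c - of_int (z c)\<bar> < 1" for k
      using classes by (simp add: sum_subtractf abs_minus_commute)
  qed
  finally show "(\<Sum>c\<in>C. max 0 (y c - of_int (z c))) \<le> (\<Sum>c\<in>C. residual_allowance (y c)) + 101"
    using K(2) by simp
qed

lemma exists_direct_arc_counts:
  fixes x :: "'a \<Rightarrow> 'b \<Rightarrow> real"
  assumes fin: "finite R" "finite C" and x: "\<forall>r\<in>R. \<forall>c\<in>C. 0 \<le> x r c"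
  shows "\<exists>X :: 'a \<Rightarrow> 'b \<Rightarrow> nat.
    (\<forall>r\<in>R. real (\<Sum>c\<in>C. X r c) \<le> direct_fraction * (\<Sum>c\<in>C. x r c) + 101) \<and>
    (\<forall>c\<in>C. real (\<Sum>r\<in>R. X r c) \<le> direct_fraction * (\<Sum>r\<in>R. x r c) + 101) \<and>
    (\<forall>r\<in>R. (\<Sum>c\<in>C. max 0 (x r c - real (X r c))) \<le> (\<Sum>c\<in>C. residual_allowance (x r c)) + 101) \<and>
    (\<forall>c\<in>C. (\<Sum>r\<in>R. max 0 (x r c - real (X r c))) \<le> (\<Sum>r\<in>R. residual_allowance (x r c)) + 101)"
proof -
  obtain Z where Z: "\<forall>r\<in>R. \<forall>c\<in>C. Z r c \<in> {\<lfloor>direct_fraction * x r c\<rfloor>, \<lceil>direct_fraction * x r c\<rceil>}"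
    "\<forall>k. \<forall>r\<in>R. \<bar>\<Sum>c\<in>{c\<in>C. residual_class (x r c) = k}. of_int (Z r c) - direct_fraction * x r c\<bar> < 1"
    "\<forall>k. \<forall>c\<in>C. \<bar>\<Sum>r\<in>{r\<in>R. residual_class (x r c) = k}. of_int (Z r c) - direct_fraction * x r c\<bar> < 1"
    using matrix_rounding_by_labels[OF fin, of "\<lambda>r c. direct_fraction * x r c"
        "\<lambda>r c. residual_class (x r c)"] by blast
  define X where "X r c = nat (Z r c)" for r c
  have X: "real (X r c) = of_int (Z r c)" if "r \<in> R" "c \<in> C" for r c
  proof -
    have "0 \<le> \<lfloor>direct_fraction * x r c\<rfloor>" using x that by (simp add: direct_fraction_def)
    moreover have "Z r c = \<lfloor>direct_fraction * x r c\<rfloor> \<or> Z r c = \<lceil>direct_fraction * x r c\<rceil>"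
      using Z(1) that by blast
    ultimately have "0 \<le> Z r c" using floor_le_ceiling[of "direct_fraction * x r c"] by linarith
    then show ?thesis by (simp add: X_def)
  qed
  have "real (\<Sum>c\<in>C. X r c) \<le> direct_fraction * (\<Sum>c\<in>C. x r c) + 101"
    "(\<Sum>c\<in>C. max 0 (x r c - real (X r c))) \<le> (\<Sum>c\<in>C. residual_allowance (x r c)) + 101"
    if "r \<in> R" for r
    using line_rounding_bounds[OF fin(2), of "x r" "Z r"] x Z that X by (simp_all cong: sum.cong)
  moreover have "real (\<Sum>r\<in>R. X r c) \<le> direct_fraction * (\<Sum>r\<in>R. x r c) + 101"
    "(\<Sum>r\<in>R. max 0 (x r c - real (X r c))) \<le> (\<Sum>r\<in>R. residual_allowance (x r c)) + 101"
    if "c \<in> C" for c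
    using line_rounding_bounds[OF fin(1), of "\<lambda>r. x r c" "\<lambda>r. Z r c"] x Z that X
    by (simp_all cong: sum.cong)
  ultimately show ?thesis by blast
qed

section \<open>Regular multigraphs and routings\<close>

text \<open>Round the product matrix \<open>a r * b c / s\<close>, which has margins \<open>a\<close> and \<open>b\<close>.\<close>
lemma exists_nat_matrix_with_margins:
  fixes a :: "'a \<Rightarrow> nat" and b :: "'b \<Rightarrow> nat"
  assumes fin: "finite R" "finite C" and totals: "(\<Sum>r\<in>R. a r) = (\<Sum>c\<in>C. b c)"
  shows "\<exists>P :: 'a \<Rightarrow> 'b \<Rightarrow> nat. (\<forall>r\<in>R. (\<Sum>c\<in>C. P r c) = a r) \<and> (\<forall>c\<in>C. (\<Sum>r\<in>R. P r c) = b c)"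
proof -
  define s where "s = (\<Sum>r\<in>R. a r)"
  define A where "A r c = real (a r) * real (b c) / real s" for r c
  have "(\<Sum>c\<in>C. A r c) = real (a r)" if "r \<in> R" for r
  proof (cases "s = 0")
    case True
    then show ?thesis using that fin by (simp add: A_def s_def)
  next
    case False
    have "(\<Sum>c\<in>C. A r c) = real (a r) * (\<Sum>c\<in>C. real (b c)) / real s"
      by (simp add: A_def sum_distrib_left sum_divide_distrib)
    also have "(\<Sum>c\<in>C. real (b c)) = real s" by (simp add: s_def totals)
    finally show ?thesis using False by simp
  qed
  moreover have "(\<Sum>r\<in>R. A r c) = real (b c)" if "c \<in> C" for c
  proof (cases "s = 0")
    case True
    then show ?thesis using that fin by (simp add: A_def s_def totals)
  next
    case False
    have "(\<Sum>r\<in>R. A r c) = (\<Sum>r\<in>R. real (a r)) * real (b c) / real s"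
      by (simp add: A_def sum_distrib_right sum_divide_distrib)
    also have "(\<Sum>r\<in>R. real (a r)) = real s" by (simp add: s_def)
    finally show ?thesis using False by simp
  qed
  ultimately obtain P where P: "\<forall>r\<in>R. \<forall>c\<in>C. P r c \<in> {\<lfloor>A r c\<rfloor>, \<lceil>A r c\<rceil>}"
    "\<forall>r\<in>R. (\<Sum>c\<in>C. of_int (P r c)) = real (a r)"
    "\<forall>c\<in>C. (\<Sum>r\<in>R. of_int (P r c)) = real (b c)"
    using matrix_rounding[OF fin, of A] by auto
  have nat_P: "real (nat (P r c)) = of_int (P r c)" if "r \<in> R" "c \<in> C" for r c
  proof -
    have "0 \<le> \<lfloor>A r c\<rfloor>" by (simp add: A_def)
    moreover have "P r c = \<lfloor>A r c\<rfloor> \<or> P r c = \<lceil>A r c\<rceil>" using P(1) that by blast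
    ultimately show ?thesis using floor_le_ceiling[of "A r c"] by linarith
  qed
  have "real (\<Sum>c\<in>C. nat (P r c)) = real (a r)" if "r \<in> R" for r
    using P(2) that by (simp add: nat_P cong: sum.cong)
  moreover have "real (\<Sum>r\<in>R. nat (P r c)) = real (b c)" if "c \<in> C" for c
    using P(3) that by (simp add: nat_P cong: sum.cong)
  ultimately show ?thesis
    unfolding of_nat_eq_iff by (intro exI[of _ "\<lambda>r c. nat (P r c)"]) blast
qed

lemma exists_regular_multigraph_above:
  fixes X :: "nat \<Rightarrow> nat \<Rightarrow> nat"
  assumes rows: "\<forall>u\<in>{1..n}. (\<Sum>v=1..n. X u v) + n \<le> r"
    and cols: "\<forall>v\<in>{1..n}. (\<Sum>u=1..n. X u v) + n \<le> r"
  shows "\<exists>mult. regular_multigraph n r mult \<and> (\<forall>u\<in>{1..n}. \<forall>v\<in>{1..n}. X u v < mult u v)"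
proof -
  define a where "a u = r - n - (\<Sum>v=1..n. X u v)" for u
  define b where "b v = r - n - (\<Sum>u=1..n. X u v)" for v
  have "(\<Sum>u=1..n. a u) + (\<Sum>u=1..n. \<Sum>v=1..n. X u v) = (\<Sum>u=1..n. a u + (\<Sum>v=1..n. X u v))"
    by (simp add: sum.distrib)
  also have "\<dots> = (\<Sum>u=1..n. r - n)"
    using rows by (intro sum.cong) (auto simp: a_def dest!: bspec)
  finally have a_total: "(\<Sum>u=1..n. a u) + (\<Sum>u=1..n. \<Sum>v=1..n. X u v) = n * (r - n)" by simp
  have "(\<Sum>v=1..n. b v) + (\<Sum>v=1..n. \<Sum>u=1..n. X u v) = (\<Sum>v=1..n. b v + (\<Sum>u=1..n. X u v))"
    by (simp add: sum.distrib)
  also have "\<dots> = (\<Sum>v=1..n. r - n)"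
    using cols by (intro sum.cong) (auto simp: b_def dest!: bspec)
  finally have "(\<Sum>v=1..n. b v) + (\<Sum>v=1..n. \<Sum>u=1..n. X u v) = n * (r - n)" by simp
  then have "(\<Sum>u=1..n. a u) = (\<Sum>v=1..n. b v)"
    using a_total sum.swap[of X "{1..n}" "{1..n}"] by linarith
  then obtain P where P: "\<forall>u\<in>{1..n}. (\<Sum>v=1..n. P u v) = a u" "\<forall>v\<in>{1..n}. (\<Sum>u=1..n. P u v) = b v"
    using exists_nat_matrix_with_margins[of "{1..n}" "{1..n}" a b] by auto
  define mult where "mult u v = X u v + P u v + 1" for u v
  have "regular_multigraph n r mult"
    unfolding regular_multigraph_def
  proof (intro conjI ballI)
    fix u assume u: "u \<in> {1..n}"
    have "(\<Sum>v=1..n. mult u v) = (\<Sum>v=1..n. X u v) + (\<Sum>v=1..n. P u v) + n"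
      unfolding mult_def sum.distrib by simp
    then show "(\<Sum>v=1..n. mult u v) = r" using P(1) rows[rule_format, OF u] u by (simp add: a_def)
  next
    fix v assume v: "v \<in> {1..n}"
    have "(\<Sum>u=1..n. mult u v) = (\<Sum>u=1..n. X u v) + (\<Sum>u=1..n. P u v) + n"
      unfolding mult_def sum.distrib by simp
    then show "(\<Sum>u=1..n. mult u v) = r" using P(2) cols[rule_format, OF v] v by (simp add: b_def)
  qed
  moreover have "\<forall>u\<in>{1..n}. \<forall>v\<in>{1..n}. X u v < mult u v" by (simp add: mult_def)
  ultimately show ?thesis by blast
qed

lemma hosts_if_routing:
  fixes S :: "'s set" and path :: "'s \<Rightarrow> arc list" and flow :: "'s \<Rightarrow> real"
  assumes "finite S" and paths: "\<forall>s\<in>S. is_path n mult (path s) \<and> 0 \<le> flow s"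
    and demand: "\<forall>u\<in>{1..n}. \<forall>v\<in>{1..n}.
      (\<Sum>s\<in>{s\<in>S. path_src (path s) = u \<and> path_tgt (path s) = v}. flow s) = A u v"
    and capacity: "\<forall>e\<in>arcs n mult. (\<Sum>s\<in>{s\<in>S. e \<in> set (path s)}. flow s) \<le> 1 / real (2 * n - 1)"
  shows "hosts n mult A"
proof -
  obtain f where f: "bij_betw f {0..<card S} S" using ex_bij_betw_nat_finite[OF assms(1)] by blast
  have reindex: "(\<Sum>k\<in>{k. k < card S \<and> Q (f k)}. flow (f k)) = (\<Sum>s\<in>{s\<in>S. Q s}. flow s)" for Q
  proof -
    have "{k. k < card S \<and> Q (f k)} = {k\<in>{0..<card S}. Q (f k)}" by auto
    then have "(\<Sum>k\<in>{k. k < card S \<and> Q (f k)}. flow (f k)) =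
        (\<Sum>k\<in>{0..<card S}. if Q (f k) then flow (f k) else 0)"
      by (simp only: sum.inter_filter[OF finite_atLeastLessThan])
    also have "\<dots> = (\<Sum>s\<in>S. if Q s then flow s else 0)"
      using sum.reindex_bij_betw[OF f, of "\<lambda>s. if Q s then flow s else 0"] by simp
    also have "\<dots> = (\<Sum>s\<in>{s\<in>S. Q s}. flow s)" by (simp only: sum.inter_filter[OF assms(1)])
    finally show ?thesis .
  qed
  show ?thesis unfolding hosts_def
  proof (intro exI[of _ "card S"] exI[of _ "\<lambda>k. path (f k)"] exI[of _ "\<lambda>k. flow (f k)"]
      conjI ballI allI impI)
    fix k assume "k < card S"
    then have "f k \<in> S" using f by (auto simp: bij_betw_def)
    then show "is_path n mult (path (f k))" "0 \<le> flow (f k)" using paths by auto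
  next
    fix u v assume "u \<in> {1..n}" "v \<in> {1..n}"
    then show "(\<Sum>k\<in>{k. k < card S \<and> path_src (path (f k)) = u \<and> path_tgt (path (f k)) = v}.
        flow (f k)) = A u v"
      using demand reindex[of "\<lambda>s. path_src (path s) = u \<and> path_tgt (path s) = v"] by simp
  next
    fix e assume "e \<in> arcs n mult"
    then show "(\<Sum>k\<in>{k. k < card S \<and> e \<in> set (path (f k))}. flow (f k)) \<le> 1 / real (2 * n - 1)"
      using capacity reindex[of "\<lambda>s. e \<in> set (path s)"] by simp
  qed
qed

lemma hosts_scale:
  assumes "hosts n mult A" "0 \<le> t" "t \<le> 1"
  shows "hosts n mult (\<lambda>u v. t * A u v)"
proof -
  obtain K :: nat and P :: "nat \<Rightarrow> arc list" and d :: "nat \<Rightarrow> real" where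
    paths: "\<forall>k<K. is_path n mult (P k) \<and> 0 \<le> d k"
    and demand: "\<forall>u\<in>{1..n}. \<forall>v\<in>{1..n}.
      (\<Sum>k\<in>{k. k < K \<and> path_src (P k) = u \<and> path_tgt (P k) = v}. d k) = A u v"
    and capacity: "\<forall>e\<in>arcs n mult. (\<Sum>k\<in>{k. k < K \<and> e \<in> set (P k)}. d k) \<le> 1 / real (2 * n - 1)"
    using assms(1) unfolding hosts_def by blast
  have "(\<Sum>k\<in>{k. k < K \<and> e \<in> set (P k)}. t * d k) \<le> 1 / real (2 * n - 1)" if "e \<in> arcs n mult" for e
  proof -
    have "(\<Sum>k\<in>{k. k < K \<and> e \<in> set (P k)}. t * d k) = t * (\<Sum>k\<in>{k. k < K \<and> e \<in> set (P k)}. d k)"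
      by (simp add: sum_distrib_left)
    also have "\<dots> \<le> 1 * (\<Sum>k\<in>{k. k < K \<and> e \<in> set (P k)}. d k)"
      using assms(3) paths by (intro mult_right_mono sum_nonneg) auto
    also have "\<dots> \<le> 1 / real (2 * n - 1)" using capacity that by simp
    finally show ?thesis .
  qed
  then show ?thesis unfolding hosts_def using paths demand assms(2)
    by (intro exI[of _ K] exI[of _ P] exI[of _ "\<lambda>k. t * d k"]) (simp flip: sum_distrib_left)
qed

text \<open>The demand \<open>x u v\<close> is sent partly along the direct arcs of index
  \<open>1, \<dots>, X u v\<close> from \<open>u\<close> to \<open>v\<close>, and the residual is spread evenly over the \<open>n\<close> two-arc
  routes through every vertex \<open>w\<close>, which use only the arcs of index 0.\<close>

datatype route = Direct nat nat nat | Relay nat nat nat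

fun route_path :: "route \<Rightarrow> arc list" where
  "route_path (Direct u v i) = [(u, v, i)]"
| "route_path (Relay u v w) = [(u, w, 0), (w, v, 0)]"

definition routes :: "nat \<Rightarrow> (nat \<Rightarrow> nat \<Rightarrow> nat) \<Rightarrow> route set" where
  "routes n X = (\<Union>u\<in>{1..n}. \<Union>v\<in>{1..n}. Direct u v ` {1..X u v} \<union> Relay u v ` {1..n})"

definition route_flow :: "nat \<Rightarrow> (nat \<Rightarrow> nat \<Rightarrow> real) \<Rightarrow> (nat \<Rightarrow> nat \<Rightarrow> nat) \<Rightarrow> route \<Rightarrow> real" where
  "route_flow n x X s = (case s of
      Direct u v i \<Rightarrow> min (x u v) (real (X u v)) / real (X u v)
    | Relay u v w \<Rightarrow> max 0 (x u v - real (X u v)) / real n)"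

lemma finite_routes: "finite (routes n X)"
  by (simp add: routes_def)

lemma Direct_in_routes [simp]:
  "Direct u v i \<in> routes n X \<longleftrightarrow> u \<in> {1..n} \<and> v \<in> {1..n} \<and> i \<in> {1..X u v}"
  unfolding routes_def by blast

lemma Relay_in_routes [simp]:
  "Relay u v w \<in> routes n X \<longleftrightarrow> u \<in> {1..n} \<and> v \<in> {1..n} \<and> w \<in> {1..n}"
  unfolding routes_def by blast

lemma is_path_route_path:
  assumes "\<forall>u\<in>{1..n}. \<forall>v\<in>{1..n}. X u v < mult u v" "s \<in> routes n X"
  shows "is_path n mult (route_path s)"
proof -
  have "(u, v, i) \<in> arcs n mult" if "u \<in> {1..n}" "v \<in> {1..n}" "i \<le> X u v" for u v i
    using assms(1) that by (fastforce simp: arcs_def)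
  then show ?thesis
    using assms(2) by (cases s) (auto simp: is_path_def arc_head_def arc_tail_def less_Suc_eq)
qed

lemma route_flow_nonneg:
  assumes "\<forall>u\<in>{1..n}. \<forall>v\<in>{1..n}. 0 \<le> x u v" "s \<in> routes n X"
  shows "0 \<le> route_flow n x X s"
  using assms by (cases s) (auto simp: route_flow_def)

lemma route_flow_demand:
  assumes "n \<ge> 1" "u \<in> {1..n}" "v \<in> {1..n}" "0 \<le> x u v"
  shows "(\<Sum>s\<in>{s\<in>routes n X. path_src (route_path s) = u \<and> path_tgt (route_path s) = v}.
      route_flow n x X s) = x u v"
proof -
  have "{s\<in>routes n X. path_src (route_path s) = u \<and> path_tgt (route_path s) = v} =
      Direct u v ` {1..X u v} \<union> Relay u v ` {1..n}"
  proof (intro equalityI subsetI)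
    fix s assume "s \<in> {s\<in>routes n X. path_src (route_path s) = u \<and> path_tgt (route_path s) = v}"
    then show "s \<in> Direct u v ` {1..X u v} \<union> Relay u v ` {1..n}"
      by (cases s) (auto simp: path_src_def path_tgt_def arc_tail_def arc_head_def)
  next
    fix s assume s: "s \<in> Direct u v ` {1..X u v} \<union> Relay u v ` {1..n}"
    then show "s \<in> {s\<in>routes n X. path_src (route_path s) = u \<and> path_tgt (route_path s) = v}"
      using assms(2,3) by (auto simp: path_src_def path_tgt_def arc_tail_def arc_head_def)
  qed
  moreover have "(\<Sum>s\<in>Direct u v ` {1..X u v}. route_flow n x X s) = min (x u v) (real (X u v))"
    using assms(4) by (cases "X u v = 0") (simp_all add: sum.reindex inj_on_def route_flow_def)
  moreover have "(\<Sum>s\<in>Relay u v ` {1..n}. route_flow n x X s) = max 0 (x u v - real (X u v))"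
    using assms(1) by (simp add: sum.reindex inj_on_def route_flow_def)
  moreover have "(\<Sum>s\<in>Direct u v ` {1..X u v} \<union> Relay u v ` {1..n}. route_flow n x X s) =
      (\<Sum>s\<in>Direct u v ` {1..X u v}. route_flow n x X s) + (\<Sum>s\<in>Relay u v ` {1..n}. route_flow n x X s)"
    by (rule sum.union_disjoint) auto
  ultimately show ?thesis by (simp add: min_def max_def)
qed

lemma route_load_direct_arc:
  assumes "i \<noteq> 0"
  shows "(\<Sum>s\<in>{s\<in>routes n X. (a, b, i) \<in> set (route_path s)}. route_flow n x X s) \<le> 1"
proof -
  define S where "S = {s\<in>routes n X. (a, b, i) \<in> set (route_path s)}"
  have "s = Direct a b i" if "(a, b, i) \<in> set (route_path s)" for s
    using that assms by (cases s) auto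
  then have "S \<subseteq> {Direct a b i}" by (auto simp: S_def)
  then consider "S = {}" | "S = {Direct a b i}" by (auto dest: subset_singletonD)
  moreover have "route_flow n x X (Direct a b i) \<le> 1"
    by (cases "X a b = 0") (simp_all add: route_flow_def divide_le_eq_1)
  ultimately show ?thesis unfolding S_def[symmetric] by cases simp_all
qed

lemma route_load_relay_arc:
  assumes row: "(\<Sum>v=1..n. max 0 (x a v - real (X a v))) \<le> real n / 2"
    and column: "(\<Sum>u=1..n. max 0 (x u b - real (X u b))) \<le> real n / 2"
  shows "(\<Sum>s\<in>{s\<in>routes n X. (a, b, 0) \<in> set (route_path s)}. route_flow n x X s) \<le> 1"
proof -
  define T1 where "T1 = (\<lambda>v. Relay a v b) ` {1..n}"
  define T2 where "T2 = (\<lambda>u. Relay u b a) ` {1..n}"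
  have T: "finite T1" "finite T2" by (simp_all add: T1_def T2_def)
  have relay_nonneg: "0 \<le> route_flow n x X s" if "s \<in> T1 \<union> T2" for s
    using that by (auto simp: T1_def T2_def route_flow_def)
  have "s \<in> T1 \<union> T2" if "s \<in> routes n X" "(a, b, 0) \<in> set (route_path s)" for s
    using that by (cases s) (auto simp: T1_def T2_def)
  then have "(\<Sum>s\<in>{s\<in>routes n X. (a, b, 0) \<in> set (route_path s)}. route_flow n x X s) \<le>
      (\<Sum>s\<in>T1 \<union> T2. route_flow n x X s)"
    using T relay_nonneg by (intro sum_mono2) auto
  also have "\<dots> \<le> (\<Sum>s\<in>T1. route_flow n x X s) + (\<Sum>s\<in>T2. route_flow n x X s)"
    using sum_Un[OF T, of "route_flow n x X"] sum_nonneg[of "T1 \<inter> T2" "route_flow n x X"]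
      relay_nonneg by auto
  also have "(\<Sum>s\<in>T1. route_flow n x X s) = (\<Sum>v=1..n. max 0 (x a v - real (X a v))) / real n"
    by (simp add: T1_def sum.reindex inj_on_def route_flow_def sum_divide_distrib)
  also have "(\<Sum>s\<in>T2. route_flow n x X s) = (\<Sum>u=1..n. max 0 (x u b - real (X u b))) / real n"
    by (simp add: T2_def sum.reindex inj_on_def route_flow_def sum_divide_distrib)
  also have "(\<Sum>v=1..n. max 0 (x a v - real (X a v))) / real n +
      (\<Sum>u=1..n. max 0 (x u b - real (X u b))) / real n \<le> (real n / 2 + real n / 2) / real n"
    unfolding add_divide_distrib[symmetric] using row column by (intro divide_right_mono) auto
  also have "\<dots> \<le> 1" by simp
  finally show ?thesis .
qed

lemma hosts_by_routes:
  assumes "n \<ge> 1"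
    and x: "\<forall>u\<in>{1..n}. \<forall>v\<in>{1..n}. 0 \<le> x u v"
    and X: "\<forall>u\<in>{1..n}. \<forall>v\<in>{1..n}. X u v < mult u v"
    and rows: "\<forall>u\<in>{1..n}. (\<Sum>v=1..n. max 0 (x u v - real (X u v))) \<le> real n / 2"
    and cols: "\<forall>v\<in>{1..n}. (\<Sum>u=1..n. max 0 (x u v - real (X u v))) \<le> real n / 2"
  shows "hosts n mult (\<lambda>u v. x u v / real (2 * n - 1))"
proof (rule hosts_if_routing[where S = "routes n X" and path = route_path
      and flow = "\<lambda>s. route_flow n x X s / real (2 * n - 1)"])
  show "finite (routes n X)" by (rule finite_routes)
  show "\<forall>s\<in>routes n X. is_path n mult (route_path s) \<and> 0 \<le> route_flow n x X s / real (2 * n - 1)"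
    using is_path_route_path[OF X] route_flow_nonneg[OF x] by auto
  show "\<forall>u\<in>{1..n}. \<forall>v\<in>{1..n}.
      (\<Sum>s\<in>{s\<in>routes n X. path_src (route_path s) = u \<and> path_tgt (route_path s) = v}.
        route_flow n x X s / real (2 * n - 1)) = x u v / real (2 * n - 1)"
    using route_flow_demand[OF assms(1)] x by (simp flip: sum_divide_distrib)
  have "(\<Sum>s\<in>{s\<in>routes n X. e \<in> set (route_path s)}. route_flow n x X s) \<le> 1"
    if e: "e \<in> arcs n mult" for e
  proof -
    obtain a b i where "e = (a, b, i)" "a \<in> {1..n}" "b \<in> {1..n}"
      using e by (cases e) (auto simp: arcs_def)
    then show ?thesis
      using route_load_direct_arc[of i] route_load_relay_arc[where x = x and X = X and a = a and b = b]
        rows cols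
      by (cases "i = 0") auto
  qed
  then show "\<forall>e\<in>arcs n mult. (\<Sum>s\<in>{s\<in>routes n X. e \<in> set (route_path s)}.
      route_flow n x X s / real (2 * n - 1)) \<le> 1 / real (2 * n - 1)"
    by (simp add: divide_right_mono flip: sum_divide_distrib)
qed

lemma direct_arcs_fit:
  assumes "n \<ge> 10200" "real k \<le> direct_fraction * (5 / 4 * real n) + 101"
  shows "k + n \<le> 2 * n - 1"
proof -
  have "real k \<le> real (n - 1)" using assms by (simp add: direct_fraction_def of_nat_diff)
  then show ?thesis by linarith
qed

lemma residuals_fit:
  fixes f :: "nat \<Rightarrow> real"
  assumes "n \<ge> 10200" "(\<Sum>v=1..n. f v) = 5 / 4 * real n"
    and "r \<le> (\<Sum>v=1..n. residual_allowance (f v)) + 101"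
  shows "r \<le> real n / 2"
proof -
  have "(\<Sum>v=1..n. residual_allowance (f v)) = 23 / 100 * real n + 26 / 125 * (\<Sum>v=1..n. f v)"
    by (simp add: residual_allowance_def sum.distrib sum_distrib_left)
  moreover have "real n \<ge> 10200" using assms(1) by simp
  ultimately show ?thesis using assms(2,3) by linarith
qed

lemma regular_multigraph_hosting:
  fixes x :: "nat \<Rightarrow> nat \<Rightarrow> real"
  assumes n: "n \<ge> 10200" and x: "\<forall>u\<in>{1..n}. \<forall>v\<in>{1..n}. 0 \<le> x u v"
    and row_x: "\<And>u. u \<in> {1..n} \<Longrightarrow> (\<Sum>v=1..n. x u v) = 5 / 4 * real n"
    and column_x: "\<And>v. v \<in> {1..n} \<Longrightarrow> (\<Sum>u=1..n. x u v) = 5 / 4 * real n"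
  shows "\<exists>mult. regular_multigraph n (2 * n - 1) mult \<and> hosts n mult (\<lambda>u v. x u v / real (2 * n - 1))"
proof -
  obtain X where X:
    "\<forall>u\<in>{1..n}. real (\<Sum>v=1..n. X u v) \<le> direct_fraction * (\<Sum>v=1..n. x u v) + 101"
    "\<forall>v\<in>{1..n}. real (\<Sum>u=1..n. X u v) \<le> direct_fraction * (\<Sum>u=1..n. x u v) + 101"
    "\<forall>u\<in>{1..n}. (\<Sum>v=1..n. max 0 (x u v - real (X u v))) \<le> (\<Sum>v=1..n. residual_allowance (x u v)) + 101"
    "\<forall>v\<in>{1..n}. (\<Sum>u=1..n. max 0 (x u v - real (X u v))) \<le> (\<Sum>u=1..n. residual_allowance (x u v)) + 101"
    using exists_direct_arc_counts[of "{1..n}" "{1..n}" x] x by auto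
  have "(\<Sum>v=1..n. X u v) + n \<le> 2 * n - 1" if "u \<in> {1..n}" for u
    using X(1)[rule_format, OF that, unfolded row_x[OF that]] by (intro direct_arcs_fit[OF n]) simp
  moreover have "(\<Sum>u=1..n. X u v) + n \<le> 2 * n - 1" if "v \<in> {1..n}" for v
    using X(2)[rule_format, OF that, unfolded column_x[OF that]] by (intro direct_arcs_fit[OF n]) simp
  ultimately obtain mult where mult: "regular_multigraph n (2 * n - 1) mult"
    "\<forall>u\<in>{1..n}. \<forall>v\<in>{1..n}. X u v < mult u v"
    using exists_regular_multigraph_above[of n X "2 * n - 1"] by blast
  have "\<forall>u\<in>{1..n}. (\<Sum>v=1..n. max 0 (x u v - real (X u v))) \<le> real n / 2"
    using X(3) row_x residuals_fit[OF n] by blast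
  moreover have "\<forall>v\<in>{1..n}. (\<Sum>u=1..n. max 0 (x u v - real (X u v))) \<le> real n / 2"
    using X(4) column_x residuals_fit[OF n] by blast
  ultimately have "hosts n mult (\<lambda>u v. x u v / real (2 * n - 1))"
    using hosts_by_routes[OF _ x mult(2)] n by simp
  with mult(1) show ?thesis by blast
qed

lemma doubly_stochastic_hosted:
  assumes n: "n \<ge> 10200" and M: "doubly_stochastic n M"
  shows "\<exists>mult. regular_multigraph n (2 * n - 1) mult \<and> hosts n mult (\<lambda>u v. 5 / 8 * M u v)"
proof -
  define x where "x u v = 5 / 4 * real n * M u v" for u v
  have "(\<Sum>v=1..n. x u v) = 5 / 4 * real n" if "u \<in> {1..n}" for u
    using M that unfolding x_def sum_distrib_left[symmetric] by (simp add: doubly_stochastic_def)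
  moreover have "(\<Sum>u=1..n. x u v) = 5 / 4 * real n" if "v \<in> {1..n}" for v
    using M that unfolding x_def sum_distrib_left[symmetric] by (simp add: doubly_stochastic_def)
  moreover have "\<forall>u\<in>{1..n}. \<forall>v\<in>{1..n}. 0 \<le> x u v"
    using M by (simp add: doubly_stochastic_def x_def)
  ultimately obtain mult where mult: "regular_multigraph n (2 * n - 1) mult"
    "hosts n mult (\<lambda>u v. x u v / real (2 * n - 1))"
    using regular_multigraph_hosting[OF n] by blast
  \<comment> \<open>The throughput obtained, \<open>5n / (4 (2n - 1))\<close>, exceeds \<open>5/8\<close>.\<close>
  have "hosts n mult (\<lambda>u v. (real (2 * n - 1) / (2 * real n)) * (x u v / real (2 * n - 1)))"
    using mult(2) n by (intro hosts_scale) auto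
  moreover have "(\<lambda>u v. real (2 * n - 1) / (2 * real n) * (x u v / real (2 * n - 1))) =
      (\<lambda>u v. 5 / 8 * M u v)"
    using n by (intro ext) (simp add: x_def of_nat_diff field_simps)
  ultimately have "hosts n mult (\<lambda>u v. 5 / 8 * M u v)" by (simp only:)
  with mult(1) show ?thesis by blast
qed

theorem theorem3p3:
  fixes \<kappa> :: real
  assumes "0 \<le> \<kappa>" and "\<kappa> < 5 / 8"
  shows "\<exists>n\<kappa>::nat. n\<kappa> > 0 \<and>
    (\<forall>n \<ge> n\<kappa>. \<forall>M. doubly_stochastic n M \<longrightarrow>
       (\<exists>mult. regular_multigraph n (2 * n - 1) mult \<and>
                hosts n mult (\<lambda>u v. \<kappa> * M u v)))"
proof (intro exI[of _ "10200 :: nat"] conjI allI impI)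
  fix n :: nat and M :: "nat \<Rightarrow> nat \<Rightarrow> real"
  assume "10200 \<le> n" "doubly_stochastic n M"
  then obtain mult where "regular_multigraph n (2 * n - 1) mult" "hosts n mult (\<lambda>u v. 5 / 8 * M u v)"
    using doubly_stochastic_hosted by blast
  moreover have "hosts n mult (\<lambda>u v. \<kappa> * M u v)"
    using hosts_scale[OF \<open>hosts n mult _\<close>, of "8 / 5 * \<kappa>"] assms by simp
  ultimately show "\<exists>mult. regular_multigraph n (2 * n - 1) mult \<and> hosts n mult (\<lambda>u v. \<kappa> * M u v)"
    by blast
qed simp

end
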